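(* Let $A$ be a trace class positive self-adjoint operator on a complex Hilbert space $\mathcal H$, let $e\in\mathcal H$ and $N\ge1$, and assume $Ae,A^2e,\dots,A^Ne$ are linearly independent. Then $$\mathrm{Tr}(A)\ge\frac{\det\Big(\big((A^{k+\ell}e|e)\big)_{0\le k\le N-1,\,0\le\ell\le N-2}\ \Big|\ \big((A^{k+N}e|e)\big)_{0\le k\le N-1}\Big)}{\det\big((A^{k+\ell}e|e)\big)_{0\le k,\ell\le N-1}},$$ where the numerator is the determinant of the $N\times N$ matrix whose first $N-1$ columns are indexed by $\ell=0,\dots,N-2$ with entries $(A^{k+\ell}e|e)$ and whose last column has entries $(A^{k+N}e|e)$ ($k$ the row index). Equality holds if and only if the range of $A$ has dimension $N$ and $e$ belongs to the range of $A$. *)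

theory Defs
  imports "HOL-Analysis.Infinite_Sum" "HOL-Library.Complex_Order" "Jordan_Normal_Form.Determinant"
begin

class complex_vector = real_vector +
  fixes scaleC :: "complex \<Rightarrow> 'a \<Rightarrow> 'a"  (infixr \<open>*\<^sub>C\<close> 75)
  assumes scaleC_add_right: "c *\<^sub>C (x + y) = c *\<^sub>C x + c *\<^sub>C y"
    and scaleC_add_left: "(c + d) *\<^sub>C x = c *\<^sub>C x + d *\<^sub>C x"
    and scaleC_scaleC: "c *\<^sub>C (d *\<^sub>C x) = (c * d) *\<^sub>C x"
    and scaleC_one: "1 *\<^sub>C x = x"
    and scaleR_scaleC: "scaleR r x = complex_of_real r *\<^sub>C x"

class complex_inner = complex_vector + real_normed_vector +
  fixes cinner :: "'a \<Rightarrow> 'a \<Rightarrow> complex"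
  assumes cinner_add_left: "cinner (x + y) z = cinner x z + cinner y z"
    and cinner_scaleC_left: "cinner (c *\<^sub>C x) y = c * cinner x y"
    and cinner_conj_sym: "cinner x y = cnj (cinner y x)"
    and cinner_self_nonneg: "Im (cinner x x) = 0 \<and> Re (cinner x x) \<ge> 0"
    and cinner_self_eq_zero: "cinner x x = 0 \<longleftrightarrow> x = 0"
    and norm_eq_sqrt_cinner: "norm x = sqrt (Re (cinner x x))"

class chilbert_space = complex_inner + complete_space

definition clinear :: "('a::complex_vector \<Rightarrow> 'b::complex_vector) \<Rightarrow> bool" where
  "clinear f \<longleftrightarrow> (\<forall>x y. f (x + y) = f x + f y) \<and> (\<forall>c x. f (c *\<^sub>C x) = c *\<^sub>C f x)"

definition bounded_clinear :: "('a::complex_inner \<Rightarrow> 'b::complex_inner) \<Rightarrow> bool" where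
  "bounded_clinear f \<longleftrightarrow> clinear f \<and> (\<exists>K. \<forall>x. norm (f x) \<le> norm x * K)"

definition selfadjoint_op :: "('a::complex_inner \<Rightarrow> 'a) \<Rightarrow> bool" where
  "selfadjoint_op A \<longleftrightarrow> (\<forall>x y. cinner (A x) y = cinner x (A y))"

definition positive_op :: "('a::complex_inner \<Rightarrow> 'a) \<Rightarrow> bool" where
  "positive_op A \<longleftrightarrow> (\<forall>x. Im (cinner (A x) x) = 0 \<and> Re (cinner (A x) x) \<ge> 0)"

definition is_onb :: "'a::complex_inner set \<Rightarrow> bool" where
  "is_onb B \<longleftrightarrow> (\<forall>b\<in>B. cinner b b = 1) \<and> (\<forall>b\<in>B. \<forall>b'\<in>B. b \<noteq> b' \<longrightarrow> cinner b b' = 0)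
     \<and> (\<forall>x. (\<forall>b\<in>B. cinner x b = 0) \<longrightarrow> x = 0)"

definition hilbert_schmidt :: "('a::chilbert_space \<Rightarrow> 'a) \<Rightarrow> bool" where
  "hilbert_schmidt A \<longleftrightarrow> bounded_clinear A \<and>
     (\<exists>B. is_onb B \<and> (\<lambda>b. (norm (A b))\<^sup>2) summable_on B)"

definition trace_class :: "('a::chilbert_space \<Rightarrow> 'a) \<Rightarrow> bool" where
  "trace_class A \<longleftrightarrow> (\<exists>S T. hilbert_schmidt S \<and> hilbert_schmidt T \<and> A = S \<circ> T)"

text \<open>Trace: sum of the diagonal entries with respect to an orthonormal basis
  (independent of the basis for trace class operators).\<close>
definition trace_op :: "('a::chilbert_space \<Rightarrow> 'a) \<Rightarrow> complex" where
  "trace_op A = infsum (\<lambda>b. cinner (A b) b) (SOME B. is_onb B)"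

definition clin_indep_family :: "nat set \<Rightarrow> (nat \<Rightarrow> 'a::complex_vector) \<Rightarrow> bool" where
  "clin_indep_family I v \<longleftrightarrow>
     (\<forall>c :: nat \<Rightarrow> complex. (\<Sum>k\<in>I. c k *\<^sub>C v k) = 0 \<longrightarrow> (\<forall>k\<in>I. c k = 0))"

definition has_cdim :: "'a::complex_vector set \<Rightarrow> nat \<Rightarrow> bool" where
  "has_cdim V n \<longleftrightarrow> (\<exists>v :: nat \<Rightarrow> 'a. clin_indep_family {..<n} v \<and>
      V = {\<Sum>k<n. c k *\<^sub>C v k | c :: nat \<Rightarrow> complex. True})"

end

theory Submission
  imports Defs
begin

text \<open>Let K be the span of e, A e, ..., A^(N-1) e and P the orthogonal projection onto K.
  Expanding the trace in an orthonormal basis and splitting each basis vector b as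
  P b + (b - P b), the cross terms vanish, so Tr A is the trace of the compression P A P plus
  the nonnegative sum of the (A (b - P b) | b - P b). In the basis A^k e of K the compression is
  the companion matrix whose last column holds the coordinates d of P (A^N e), so its trace is
  d (N-1); these coordinates solve the Hankel system with matrix ((A^(k+l) e | e)), and Cramer's
  rule expresses d (N-1) as the stated quotient of determinants. Equality forces A to vanish
  on the orthogonal complement of K, i.e. range A \<subseteq> K, and a dimension count shows this is
  equivalent to range A being N-dimensional and containing e.\<close>

instance chilbert_space \<subseteq> banach ..

declare scaleC_one [simp] scaleC_scaleC [simp]

lemma scaleC_zero_left [simp]: "(0::complex) *\<^sub>C (x::'a::complex_vector) = 0"
  by (metis add_cancel_right_right add_0 scaleC_add_left)

lemma scaleC_zero_right [simp]: "c *\<^sub>C (0::'a::complex_vector) = 0"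
  by (metis add_cancel_right_right add_0 scaleC_add_right)

lemma scaleC_minus_left: "(- c) *\<^sub>C x = - (c *\<^sub>C (x::'a::complex_vector))"
  by (metis add_eq_0_iff2 add.right_inverse scaleC_add_left scaleC_zero_left)

lemma scaleC_diff_left: "(c - d) *\<^sub>C x = c *\<^sub>C x - d *\<^sub>C (x::'a::complex_vector)"
  by (metis diff_conv_add_uminus scaleC_add_left scaleC_minus_left)

lemma scaleC_sum_left: "(\<Sum>i\<in>I. f i) *\<^sub>C x = (\<Sum>i\<in>I. f i *\<^sub>C (x::'a::complex_vector))"
  by (induction I rule: infinite_finite_induct) (auto simp: scaleC_add_left)

lemma scaleC_sum_right: "c *\<^sub>C (\<Sum>i\<in>I. f i) = (\<Sum>i\<in>I. c *\<^sub>C (f i::'a::complex_vector))"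
  by (induction I rule: infinite_finite_induct) (auto simp: scaleC_add_right)

lemma cinner_zero_left [simp]: "cinner 0 (y::'a::complex_inner) = 0"
  by (metis add_cancel_right_right add_0 cinner_add_left)

lemma cinner_zero_right [simp]: "cinner (x::'a::complex_inner) 0 = 0"
  by (metis cinner_conj_sym cinner_zero_left complex_cnj_zero)

lemma cnj_cinner [simp]: "cnj (cinner x y) = cinner y (x::'a::complex_inner)"
  by (simp add: cinner_conj_sym[of y x])

lemma cinner_minus_left: "cinner (- x) (y::'a::complex_inner) = - cinner x y"
  by (metis add_eq_0_iff2 add.right_inverse cinner_add_left cinner_zero_left)

lemma cinner_diff_left: "cinner (x - z) (y::'a::complex_inner) = cinner x y - cinner z y"
  by (metis diff_conv_add_uminus cinner_add_left cinner_minus_left)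

lemma cinner_add_right: "cinner x (y + z) = cinner x y + cinner x (z::'a::complex_inner)"
  by (metis cinner_add_left cinner_conj_sym complex_cnj_add)

lemma cinner_diff_right: "cinner x (y - z) = cinner x y - cinner x (z::'a::complex_inner)"
  by (metis cinner_diff_left cinner_conj_sym complex_cnj_diff)

lemma cinner_scaleC_right: "cinner x (c *\<^sub>C y) = cnj c * cinner x (y::'a::complex_inner)"
  by (metis cinner_scaleC_left cinner_conj_sym complex_cnj_mult)

lemma cinner_sum_left: "cinner (\<Sum>i\<in>I. f i) (y::'a::complex_inner) = (\<Sum>i\<in>I. cinner (f i) y)"
  by (induction I rule: infinite_finite_induct) (auto simp: cinner_add_left)

lemma cinner_sum_right: "cinner y (\<Sum>i\<in>I. f i) = (\<Sum>i\<in>I. cinner (y::'a::complex_inner) (f i))"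
  by (induction I rule: infinite_finite_induct) (auto simp: cinner_add_right)

lemmas cinner_simps = cinner_add_left cinner_add_right cinner_diff_left cinner_diff_right
  cinner_scaleC_left cinner_scaleC_right cinner_sum_left cinner_sum_right cinner_minus_left

lemma cinner_self: "cinner x x = complex_of_real ((norm (x::'a::complex_inner))\<^sup>2)"
  using cinner_self_nonneg[of x] by (simp add: norm_eq_sqrt_cinner complex_eq_iff)

lemma cinner_mult_cinner_swap:
  "cinner x y * cinner y x = complex_of_real ((cmod (cinner x (y::'a::complex_inner)))\<^sup>2)"
  by (metis cnj_cinner complex_norm_square)

lemma cinner_cauchy_schwarz: "cmod (cinner x y) \<le> norm x * norm (y::'a::complex_inner)"
proof (cases "y = 0")
  case False
  define s where "s = (norm y)\<^sup>2"
  have s: "s > 0" using False by (simp add: s_def)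
  define a where "a = cinner x y / complex_of_real s"
  have "cinner (x - a *\<^sub>C y) (x - a *\<^sub>C y)
      = cinner x x - cnj a * cinner x y - a * cinner y x + a * cnj a * cinner y y"
    by (simp add: cinner_simps algebra_simps)
  also have "\<dots> = cinner x x - cinner x y * cinner y x / complex_of_real s"
    using s by (simp add: a_def cinner_self[of y] s_def[symmetric] field_simps)
  also have "\<dots> = complex_of_real ((norm x)\<^sup>2 - (cmod (cinner x y))\<^sup>2 / s)"
    by (simp add: cinner_mult_cinner_swap cinner_self)
  finally have "(cmod (cinner x y))\<^sup>2 / s \<le> (norm x)\<^sup>2"
    using cinner_self_nonneg[of "x - a *\<^sub>C y"] by simp
  then have "(cmod (cinner x y))\<^sup>2 \<le> (norm x * norm y)\<^sup>2"
    using s by (simp add: divide_le_eq s_def power_mult_distrib)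
  then show ?thesis by (rule power2_le_imp_le) simp
qed simp

lemma cinner_scaleR_left: "cinner (r *\<^sub>R x) (y::'a::complex_inner) = r *\<^sub>R cinner x y"
  by (simp add: scaleR_scaleC cinner_scaleC_left scaleR_conv_of_real)

lemma bounded_linear_cinner_left: "bounded_linear (\<lambda>x. cinner x (y::'a::complex_inner))"
  by (rule bounded_linear_intro[where K = "norm y"])
    (simp_all add: cinner_add_left cinner_scaleR_left cinner_cauchy_schwarz)

lemma cinner_eq_zero_allI: "(\<And>y. cinner x y = 0) \<Longrightarrow> x = (0::'a::complex_inner)"
  using cinner_self_eq_zero by blast

lemma sgn_eq_scaleC: "sgn x = complex_of_real (inverse (norm x)) *\<^sub>C (x::'a::complex_inner)"
  by (simp add: sgn_div_norm scaleR_scaleC)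

lemma cinner_sgn_self: "x \<noteq> 0 \<Longrightarrow> cinner (sgn x) (sgn x) = (1::complex)"
  by (simp only: sgn_eq_scaleC cinner_scaleC_left cinner_scaleC_right)
    (simp add: cinner_self power2_eq_square field_simps)

lemma clinear_add: "clinear f \<Longrightarrow> f (x + y) = f x + f y"
  by (simp add: clinear_def)

lemma clinear_scaleC: "clinear f \<Longrightarrow> f (c *\<^sub>C x) = c *\<^sub>C f x"
  by (simp add: clinear_def)

lemma clinear_zero: "clinear f \<Longrightarrow> f 0 = 0"
  by (metis clinear_scaleC scaleC_zero_left)

lemma clinear_diff:
  assumes "clinear f"
  shows "f (x - y) = f x - f y"
  using clinear_add[OF assms, of "x - y" y] by (simp add: algebra_simps)

lemma clinear_sum:
  assumes "clinear f"
  shows "f (\<Sum>i\<in>I. g i) = (\<Sum>i\<in>I. f (g i))"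
  by (induction I rule: infinite_finite_induct)
    (auto simp: clinear_add[OF assms] clinear_zero[OF assms])

lemma bounded_clinear_clinear: "bounded_clinear f \<Longrightarrow> clinear f"
  by (simp add: bounded_clinear_def)

lemma bounded_clinear_bounded_linear: "bounded_clinear f \<Longrightarrow> bounded_linear f"
  unfolding bounded_linear_def bounded_linear_axioms_def linear_def
  by (intro conjI, unfold_locales)
    (auto simp: clinear_add clinear_scaleC scaleR_scaleC bounded_clinear_def)

lemma bounded_clinear_nonneg_bound:
  assumes "bounded_clinear f"
  obtains K where "K \<ge> 0" "\<And>x. norm (f x) \<le> norm x * K"
proof -
  obtain K where K: "\<And>x. norm (f x) \<le> norm x * K"
    using assms by (auto simp: bounded_clinear_def)
  have "norm (f x) \<le> norm x * \<bar>K\<bar>" for x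
    by (rule order.trans[OF K mult_left_mono]) auto
  then show ?thesis by (rule that[rotated]) simp
qed

section \<open>Orthonormal bases\<close>

definition orthonormal :: "'a::complex_inner set \<Rightarrow> bool" where
  "orthonormal B \<longleftrightarrow> (\<forall>b\<in>B. cinner b b = 1) \<and> (\<forall>b\<in>B. \<forall>b'\<in>B. b \<noteq> b' \<longrightarrow> cinner b b' = 0)"

lemma is_onb_orthonormal: "is_onb B \<Longrightarrow> orthonormal B"
  by (simp add: is_onb_def orthonormal_def)

lemma orthonormal_Union_chain:
  assumes "C \<in> chains {B. orthonormal B}"
  shows "orthonormal (\<Union>C)"
  unfolding orthonormal_def
proof (intro conjI ballI impI)
  fix b assume "b \<in> \<Union>C"
  then show "cinner b b = 1" using assms by (auto simp: chains_def orthonormal_def)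
next
  fix b b' assume "b \<in> \<Union>C" "b' \<in> \<Union>C" "b \<noteq> b'"
  then obtain X Y where XY: "X \<in> C" "b \<in> X" "Y \<in> C" "b' \<in> Y" by auto
  with assms have "X \<subseteq> Y \<or> Y \<subseteq> X" by (auto simp: chains_def chain_subset_def)
  then obtain Z where "Z \<in> C" "b \<in> Z" "b' \<in> Z" using XY by blast
  with assms \<open>b \<noteq> b'\<close> show "cinner b b' = 0"
    by (auto simp: chains_def orthonormal_def)
qed

lemma maximal_orthonormal_is_onb:
  assumes M: "orthonormal M" and max: "\<And>X. orthonormal X \<Longrightarrow> M \<subseteq> X \<Longrightarrow> X = M"
  shows "is_onb M"
  unfolding is_onb_def
proof (intro conjI allI impI)
  show "\<forall>b\<in>M. cinner b b = 1" "\<forall>b\<in>M. \<forall>b'\<in>M. b \<noteq> b' \<longrightarrow> cinner b b' = 0"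
    using M by (auto simp: orthonormal_def)
  fix x assume x: "\<forall>b\<in>M. cinner x b = 0"
  show "x = 0"
  proof (rule ccontr)
    assume "x \<noteq> 0"
    define u where "u = sgn x"
    have uu: "cinner u u = 1" unfolding u_def by (rule cinner_sgn_self[OF \<open>x \<noteq> 0\<close>])
    have ub: "cinner u b = 0" if "b \<in> M" for b
      using x that by (simp add: u_def sgn_eq_scaleC cinner_scaleC_left)
    have bu: "cinner b u = 0" if "b \<in> M" for b
      using ub[OF that] by (metis cnj_cinner complex_cnj_zero)
    have "orthonormal (insert u M)" using M uu ub bu by (auto simp: orthonormal_def)
    then have "insert u M = M" using max by blast
    then show False using ub uu by force
  qed
qed

lemma is_onb_exists: "\<exists>B::'a::complex_inner set. is_onb B"
proof -
  obtain M :: "'a set" where "M \<in> {B. orthonormal B}"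
    and "\<forall>X\<in>{B. orthonormal B}. M \<subseteq> X \<longrightarrow> X = M"
    using Zorn_Lemma[of "{B. orthonormal B}"] orthonormal_Union_chain by blast
  then show ?thesis using maximal_orthonormal_is_onb by blast
qed

lemma is_onb_some: "is_onb (SOME B::'a::complex_inner set. is_onb B)"
  by (rule someI_ex[OF is_onb_exists])

lemma orthonormal_norm_sum:
  assumes B: "orthonormal B" and F: "finite F" "F \<subseteq> B"
  shows "(norm (\<Sum>b\<in>F. a b *\<^sub>C b))\<^sup>2 = (\<Sum>b\<in>F. (cmod (a b))\<^sup>2)"
proof -
  have inner: "cinner (\<Sum>b\<in>F. a b *\<^sub>C b) c = a c" if "c \<in> F" for c
  proof -
    have "cinner (\<Sum>b\<in>F. a b *\<^sub>C b) c = (\<Sum>b\<in>F. if b = c then a b else 0)"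
      unfolding cinner_simps using B F that by (intro sum.cong) (auto simp: orthonormal_def)
    then show ?thesis using F that by simp
  qed
  have "cinner (\<Sum>b\<in>F. a b *\<^sub>C b) (\<Sum>b\<in>F. a b *\<^sub>C b) = (\<Sum>c\<in>F. cnj (a c) * a c)"
    by (simp add: cinner_sum_right cinner_scaleC_right inner)
  also have "\<dots> = (\<Sum>c\<in>F. complex_of_real ((cmod (a c))\<^sup>2))"
    by (intro sum.cong refl) (metis complex_norm_square mult.commute)
  also have "\<dots> = complex_of_real (\<Sum>c\<in>F. (cmod (a c))\<^sup>2)"
    by simp
  finally show ?thesis unfolding cinner_self of_real_eq_iff .
qed

lemma bessel_inequality:
  assumes B: "orthonormal B" and F: "finite F" "F \<subseteq> B"
  shows "(\<Sum>b\<in>F. (cmod (cinner x b))\<^sup>2) \<le> (norm x)\<^sup>2"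
proof -
  define p where "p = (\<Sum>b\<in>F. cinner x b *\<^sub>C b)"
  define S where "S = (\<Sum>b\<in>F. (cmod (cinner x b))\<^sup>2)"
  have px: "cinner p x = complex_of_real S"
    by (simp add: p_def S_def cinner_simps cinner_mult_cinner_swap)
  have pp: "cinner p p = complex_of_real S"
    using orthonormal_norm_sum[OF B F, of "\<lambda>b. cinner x b"] by (simp add: p_def S_def cinner_self)
  have xp: "cinner x p = complex_of_real S"
    using px by (metis cnj_cinner complex_cnj_complex_of_real)
  have "cinner (x - p) (x - p) = cinner x x - complex_of_real S"
    by (simp add: cinner_diff_left cinner_diff_right px xp pp)
  then show ?thesis using cinner_self_nonneg[of "x - p"] by (simp add: S_def cinner_self[of x])
qed

lemma bessel_summable:
  assumes "orthonormal B"
  shows "(\<lambda>b. (cmod (cinner x b))\<^sup>2) summable_on B"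
  by (rule nonneg_bdd_above_summable_on)
    (use bessel_inequality[OF assms] in \<open>auto intro!: bdd_aboveI[where M = "(norm x)\<^sup>2"]\<close>)

lemma summable_on_if_small_tails:
  fixes f :: "'i \<Rightarrow> 'a::banach"
  assumes small: "\<And>e. e > 0 \<Longrightarrow>
    \<exists>F0. finite F0 \<and> F0 \<subseteq> B \<and> (\<forall>G. finite G \<and> G \<subseteq> B - F0 \<longrightarrow> norm (sum f G) < e)"
  shows "f summable_on B"
proof -
  have "\<exists>P. eventually P (finite_subsets_at_top B) \<and>
      (\<forall>F F'. P F \<and> P F' \<longrightarrow> dist (sum f F) (sum f F') < e)" if "e > 0" for e
  proof -
    obtain F0 where F0: "finite F0" "F0 \<subseteq> B"
      and tail: "\<And>G. finite G \<Longrightarrow> G \<subseteq> B - F0 \<Longrightarrow> norm (sum f G) < e / 2"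
      using small[of "e / 2"] \<open>e > 0\<close> by auto
    define P where "P F \<longleftrightarrow> finite F \<and> F0 \<subseteq> F \<and> F \<subseteq> B" for F
    have "eventually P (finite_subsets_at_top B)"
      unfolding P_def eventually_finite_subsets_at_top using F0 by blast
    moreover have "dist (sum f F) (sum f F') < e" if "P F" "P F'" for F F'
    proof -
      have split: "sum f G = sum f (G - F0) + sum f F0" if "P G" for G
        using that by (simp add: P_def sum.subset_diff)
      have "dist (sum f F) (sum f F') = norm (sum f (F - F0) - sum f (F' - F0))"
        by (simp add: split[OF \<open>P F\<close>] split[OF \<open>P F'\<close>] dist_norm)
      also have "\<dots> \<le> norm (sum f (F - F0)) + norm (sum f (F' - F0))"
        by (rule norm_triangle_ineq4)
      also have "\<dots> < e / 2 + e / 2"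
        using that by (intro add_strict_mono tail) (auto simp: P_def)
      finally show ?thesis by simp
    qed
    ultimately show ?thesis by blast
  qed
  then have "cauchy_filter (filtermap (sum f) (finite_subsets_at_top B))"
    by (simp add: cauchy_filter_metric_filtermap)
  then obtain L where "filtermap (sum f) (finite_subsets_at_top B) \<le> nhds L"
    by (metis cauchy_filter_convergent convergent_filter.cases)
  then show ?thesis by (auto simp: summable_on_def has_sum_def filterlim_def)
qed

lemma orthonormal_summable:
  fixes B :: "'a::chilbert_space set"
  assumes B: "orthonormal B" and sq: "(\<lambda>b. (cmod (a b))\<^sup>2) summable_on B"
  shows "(\<lambda>b. a b *\<^sub>C b) summable_on B"
proof (rule summable_on_if_small_tails)
  fix e :: real assume "e > 0"
  define g where "g b = (cmod (a b))\<^sup>2" for b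
  define L where "L = infsum g B"
  have L: "(g has_sum L) B" using sq by (simp add: g_def[abs_def] L_def)
  have "e\<^sup>2 > 0" using \<open>e > 0\<close> by simp
  then obtain F0 where F0: "finite F0" "F0 \<subseteq> B" and approx: "dist (sum g F0) L \<le> e\<^sup>2 / 2"
    using has_sum_finite_approximation[OF L, of "e\<^sup>2 / 2"] by auto
  have F0_sum: "L - sum g F0 < e\<^sup>2"
    using approx \<open>e\<^sup>2 > 0\<close> unfolding dist_real_def by (simp only: abs_le_iff) linarith
  have "norm (\<Sum>b\<in>G. a b *\<^sub>C b) < e" if G: "finite G" "G \<subseteq> B - F0" for G
  proof -
    have "sum g F0 + sum g G = sum g (F0 \<union> G)"
      using G F0 by (subst sum.union_disjoint) auto
    also have "\<dots> \<le> L"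
      using G F0 by (intro finite_sum_le_has_sum[OF L]) (auto simp: g_def)
    finally have "sum g F0 + sum g G \<le> L" .
    moreover have "(norm (\<Sum>b\<in>G. a b *\<^sub>C b))\<^sup>2 = sum g G"
      using G by (auto simp: g_def intro: orthonormal_norm_sum[OF B])
    ultimately have "(norm (\<Sum>b\<in>G. a b *\<^sub>C b))\<^sup>2 < e\<^sup>2"
      using F0_sum by linarith
    then show ?thesis using \<open>e > 0\<close> by (simp add: power_less_imp_less_base)
  qed
  then show "\<exists>F0. finite F0 \<and> F0 \<subseteq> B \<and> (\<forall>G. finite G \<and> G \<subseteq> B - F0 \<longrightarrow> norm (\<Sum>b\<in>G. a b *\<^sub>C b) < e)"
    using F0 by blast
qed

lemma onb_expansion:
  fixes x :: "'a::chilbert_space"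
  assumes B: "is_onb B"
  shows "((\<lambda>b. cinner x b *\<^sub>C b) has_sum x) B"
proof -
  have ON: "orthonormal B" using B by (rule is_onb_orthonormal)
  define z where "z = infsum (\<lambda>b. cinner x b *\<^sub>C b) B"
  have z: "((\<lambda>b. cinner x b *\<^sub>C b) has_sum z) B"
    using orthonormal_summable[OF ON bessel_summable[OF ON]] by (simp add: z_def)
  have "cinner z c = cinner x c" if c: "c \<in> B" for c
  proof -
    have "((\<lambda>b. cinner (cinner x b *\<^sub>C b) c) has_sum cinner z c) B"
      by (rule has_sum_bounded_linear[OF bounded_linear_cinner_left z])
    moreover have "((\<lambda>b. cinner (cinner x b *\<^sub>C b) c) has_sum cinner x c) B"
      using ON c by (intro has_sum_finite_neutralI[of "{c}"]) (auto simp: orthonormal_def cinner_scaleC_left)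
    ultimately show ?thesis using has_sum_unique by blast
  qed
  then have "\<forall>b\<in>B. cinner (x - z) b = 0" by (simp add: cinner_diff_left)
  then have "x - z = 0" using B unfolding is_onb_def by blast
  then show ?thesis using z by simp
qed

lemma parseval:
  fixes x :: "'a::chilbert_space"
  assumes "is_onb B"
  shows "((\<lambda>b. cinner x b * cinner b y) has_sum cinner x y) B"
  using has_sum_bounded_linear[OF bounded_linear_cinner_left[of y] onb_expansion[OF assms, of x]]
  by (simp add: cinner_scaleC_left)

lemma parseval_norm:
  fixes x :: "'a::chilbert_space"
  assumes "is_onb B"
  shows "((\<lambda>b. (cmod (cinner x b))\<^sup>2) has_sum (norm x)\<^sup>2) B"
  using has_sum_Re[OF parseval[OF assms, of x x]] by (simp add: cinner_mult_cinner_swap cinner_self)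

section \<open>Adjoints, Hilbert--Schmidt and trace class operators\<close>

lemma has_sum_diff:
  fixes f g :: "'i \<Rightarrow> 'b::topological_ab_group_add"
  assumes "(f has_sum a) A" "(g has_sum b) A"
  shows "((\<lambda>x. f x - g x) has_sum (a - b)) A"
  using has_sum_add[OF assms(1), of "\<lambda>x. - g x" "- b"] assms(2) by (simp add: has_sum_uminus)

lemma has_sum_sum:
  fixes f :: "'i \<Rightarrow> 'a \<Rightarrow> 'b::topological_comm_monoid_add"
  assumes "finite I" "\<And>i. i \<in> I \<Longrightarrow> (f i has_sum s i) A"
  shows "((\<lambda>x. \<Sum>i\<in>I. f i x) has_sum (\<Sum>i\<in>I. s i)) A"
  using assms by (induction I rule: finite_induct) (auto intro!: has_sum_add)

lemma orthonormal_sum_cinner_image_le: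
  fixes T :: "'a::complex_inner \<Rightarrow> 'b::complex_inner"
  assumes T: "bounded_clinear T" and K: "K \<ge> 0" "\<And>x. norm (T x) \<le> norm x * K"
    and B: "orthonormal B" and F: "finite F" "F \<subseteq> B"
  shows "(\<Sum>b\<in>F. (cmod (cinner y (T b)))\<^sup>2) \<le> (K * norm y)\<^sup>2"
proof -
  define S where "S = (\<Sum>b\<in>F. (cmod (cinner y (T b)))\<^sup>2)"
  define z where "z = (\<Sum>b\<in>F. cinner y (T b) *\<^sub>C b)"
  have z: "(norm z)\<^sup>2 = S" unfolding z_def S_def by (rule orthonormal_norm_sum[OF B F])
  have "cinner (T z) y = (\<Sum>b\<in>F. cinner y (T b) * cinner (T b) y)"
    by (simp add: z_def clinear_sum[OF bounded_clinear_clinear[OF T]]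
        clinear_scaleC[OF bounded_clinear_clinear[OF T]] cinner_sum_left cinner_scaleC_left)
  also have "\<dots> = complex_of_real S"
    unfolding S_def of_real_sum by (intro sum.cong refl cinner_mult_cinner_swap)
  finally have TzS: "cinner (T z) y = complex_of_real S" .
  have "S \<ge> 0" unfolding S_def by (simp add: sum_nonneg)
  then have "S = cmod (cinner (T z) y)" using TzS by simp
  also have "\<dots> \<le> norm (T z) * norm y"
    by (rule cinner_cauchy_schwarz)
  also have "\<dots> \<le> norm z * (K * norm y)"
    using mult_right_mono[OF K(2)[of z] norm_ge_zero[of y]] by (simp add: mult.assoc)
  finally have "norm z * norm z \<le> norm z * (K * norm y)" using z by (simp add: power2_eq_square)
  then have "norm z \<le> K * norm y"
    using K by (cases "norm z = 0") (simp_all add: mult_le_cancel_left_pos)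
  then have "(norm z)\<^sup>2 \<le> (K * norm y)\<^sup>2" by (rule power_mono) simp
  then show ?thesis using z by (simp add: S_def)
qed

lemma adjoint_exists:
  fixes T :: "'a::chilbert_space \<Rightarrow> 'a"
  assumes T: "bounded_clinear T"
  shows "\<exists>T'. \<forall>x y. cinner (T x) y = cinner x (T' y)"
proof -
  define B :: "'a set" where "B = (SOME B. is_onb B)"
  have B: "is_onb B" unfolding B_def by (rule is_onb_some)
  have ON: "orthonormal B" by (rule is_onb_orthonormal[OF B])
  obtain K where K: "K \<ge> 0" "\<And>x. norm (T x) \<le> norm x * K"
    using bounded_clinear_nonneg_bound[OF T] by blast
  define T' where "T' y = infsum (\<lambda>b. cinner y (T b) *\<^sub>C b) B" for y
  have T': "((\<lambda>b. cinner y (T b) *\<^sub>C b) has_sum T' y) B" for y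
  proof -
    have "(\<lambda>b. (cmod (cinner y (T b)))\<^sup>2) summable_on B"
      using orthonormal_sum_cinner_image_le[OF T K ON]
      by (intro nonneg_bdd_above_summable_on) (auto intro!: bdd_aboveI[where M = "(K * norm y)\<^sup>2"])
    then show ?thesis unfolding T'_def by (simp add: orthonormal_summable[OF ON])
  qed
  have "cinner (T x) y = cinner x (T' y)" for x y
  proof -
    have bl: "bounded_linear (\<lambda>v. cinner (T v) y)"
      by (rule bounded_linear_compose[OF bounded_linear_cinner_left bounded_clinear_bounded_linear[OF T]])
    have "((\<lambda>b. cinner (T (cinner x b *\<^sub>C b)) y) has_sum cinner (T x) y) B"
      by (rule has_sum_bounded_linear[OF bl onb_expansion[OF B]])
    moreover have "((\<lambda>b. cinner (cinner y (T b) *\<^sub>C b) x) has_sum cinner (T' y) x) B"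
      by (rule has_sum_bounded_linear[OF bounded_linear_cinner_left T'])
    then have "((\<lambda>b. cnj (cinner (cinner y (T b) *\<^sub>C b) x)) has_sum cnj (cinner (T' y) x)) B"
      by (simp only: has_sum_cnj_iff)
    moreover have "cnj (cinner (cinner y (T b) *\<^sub>C b) x) = cinner (T (cinner x b *\<^sub>C b)) y" for b
      by (simp add: clinear_scaleC[OF bounded_clinear_clinear[OF T]] cinner_scaleC_left mult.commute)
    ultimately show ?thesis using has_sum_unique by fastforce
  qed
  then show ?thesis by blast
qed

lemma adjoint_sym:
  assumes "\<And>x y. cinner (T x) y = cinner x (T' y)"
  shows "cinner (T' x) y = cinner x (T (y::'a::complex_inner))"
  using arg_cong[OF assms[of y x], of cnj] by simp

text \<open>Hilbert--Schmidt summability transfers to the adjoint and to any other basis, since both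
  sums equal the double sum of the squared matrix entries.\<close>

lemma hilbert_schmidt_summable_adjoint:
  fixes T T' :: "'a::chilbert_space \<Rightarrow> 'a"
  assumes adj: "\<And>x y. cinner (T x) y = cinner x (T' y)"
    and B: "is_onb B" and C: "is_onb C"
    and T: "(\<lambda>b. (norm (T b))\<^sup>2) summable_on B"
  shows "(\<lambda>c. (norm (T' c))\<^sup>2) summable_on C"
proof (rule nonneg_bdd_above_summable_on)
  show "bdd_above (sum (\<lambda>c. (norm (T' c))\<^sup>2) ` {F. F \<subseteq> C \<and> finite F})"
  proof (rule bdd_aboveI2)
    fix G assume "G \<in> {F. F \<subseteq> C \<and> finite F}"
    then have G: "G \<subseteq> C" "finite G" by auto
    define f where "f b c = (cmod (cinner (T b) c))\<^sup>2" for b c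
    have "cmod (cinner (T' c) b) = cmod (cinner (T b) c)" for b c
      unfolding adj by (subst complex_mod_cnj[symmetric]) simp
    then have "((\<lambda>b. f b c) has_sum (norm (T' c))\<^sup>2) B" for c
      using parseval_norm[OF B, of "T' c"] by (simp add: f_def)
    then have "((\<lambda>b. \<Sum>c\<in>G. f b c) has_sum (\<Sum>c\<in>G. (norm (T' c))\<^sup>2)) B"
      by (rule has_sum_sum[OF G(2)])
    moreover have "(\<Sum>c\<in>G. f b c) \<le> (norm (T b))\<^sup>2" for b
      unfolding f_def using G by (intro finite_sum_le_has_sum[OF parseval_norm[OF C]]) auto
    ultimately show "(\<Sum>c\<in>G. (norm (T' c))\<^sup>2) \<le> infsum (\<lambda>b. (norm (T b))\<^sup>2) B"
      by (rule has_sum_mono[OF _ has_sum_infsum[OF T]])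
  qed
qed simp

lemma hilbert_schmidt_summable_any_onb:
  fixes T :: "'a::chilbert_space \<Rightarrow> 'a"
  assumes "hilbert_schmidt T" and C: "is_onb C"
  shows "(\<lambda>c. (norm (T c))\<^sup>2) summable_on C"
proof -
  obtain B where T: "bounded_clinear T" "is_onb B" "(\<lambda>b. (norm (T b))\<^sup>2) summable_on B"
    using assms(1) by (auto simp: hilbert_schmidt_def)
  obtain T' where adj: "\<And>x y. cinner (T x) y = cinner x (T' y)"
    using adjoint_exists[OF T(1)] by blast
  have "(\<lambda>c. (norm (T' c))\<^sup>2) summable_on C"
    by (rule hilbert_schmidt_summable_adjoint[OF adj T(2) C T(3)])
  then show ?thesis by (rule hilbert_schmidt_summable_adjoint[OF adjoint_sym[OF adj] C C])
qed

lemma trace_class_summable: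
  fixes A :: "'a::chilbert_space \<Rightarrow> 'a"
  assumes "trace_class A" and C: "is_onb C"
  shows "(\<lambda>c. cinner (A c) c) summable_on C"
proof -
  obtain S T where S: "hilbert_schmidt S" and T: "hilbert_schmidt T" and A: "A = S \<circ> T"
    using assms(1) by (auto simp: trace_class_def)
  obtain B where "bounded_clinear S" "is_onb B" "(\<lambda>b. (norm (S b))\<^sup>2) summable_on B"
    using S by (auto simp: hilbert_schmidt_def)
  moreover obtain S' where adj: "\<And>x y. cinner (S x) y = cinner x (S' y)"
    using adjoint_exists[OF \<open>bounded_clinear S\<close>] by blast
  ultimately have S': "(\<lambda>c. (norm (S' c))\<^sup>2) summable_on C"
    using hilbert_schmidt_summable_adjoint[OF adj _ C] by blast
  have "norm (cinner (A c) c) \<le> (norm (T c))\<^sup>2 + (norm (S' c))\<^sup>2" for c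
  proof -
    have "norm (cinner (A c) c) \<le> norm (T c) * norm (S' c)"
      using cinner_cauchy_schwarz[of "T c" "S' c"] by (simp add: A adj)
    also have "\<dots> \<le> (norm (T c))\<^sup>2 + (norm (S' c))\<^sup>2"
      using sum_squares_bound[of "norm (T c)" "norm (S' c)"]
        mult_nonneg_nonneg[OF norm_ge_zero norm_ge_zero, of "T c" "S' c"] by linarith
    finally show ?thesis .
  qed
  then have "(\<lambda>c. norm (cinner (A c) c)) summable_on C"
    using summable_on_add[OF hilbert_schmidt_summable_any_onb[OF T C] S']
    by (rule_tac summable_on_comparison_test) auto
  then show ?thesis by (rule abs_summable_summable)
qed

lemma trace_class_has_sum_trace_op:
  assumes "trace_class A"
  shows "((\<lambda>b. cinner (A b) b) has_sum trace_op A) (SOME B. is_onb B)"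
  using trace_class_summable[OF assms is_onb_some] by (simp add: trace_op_def)

lemma selfadjoint_op_funpow:
  assumes "selfadjoint_op A"
  shows "cinner ((A ^^ k) x) y = cinner x ((A ^^ k) y)"
proof (induction k arbitrary: y)
  case (Suc k)
  have "cinner ((A ^^ Suc k) x) y = cinner ((A ^^ k) x) (A y)"
    using assms by (simp add: selfadjoint_op_def)
  also have "\<dots> = cinner x ((A ^^ Suc k) y)"
    by (simp add: Suc.IH funpow_swap1)
  finally show ?case .
qed simp

lemma linear_coeff_zero_if_quadratic_nonneg:
  fixes a c :: real
  assumes "c \<ge> 0" and nonneg: "\<And>t. 0 \<le> 2 * t * a + t\<^sup>2 * c"
  shows "a = 0"
proof -
  define t where "t = - a / (c + 1)"
  have ct: "(c + 1) * t = - a" using \<open>c \<ge> 0\<close> by (simp add: t_def)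
  have "(c + 1)\<^sup>2 * (2 * t * a + t\<^sup>2 * c) = 2 * a * ((c + 1) * t) * (c + 1) + ((c + 1) * t)\<^sup>2 * c"
    by (simp add: algebra_simps power2_eq_square)
  also have "\<dots> = - (a\<^sup>2 * (c + 2))"
    unfolding ct by (simp add: algebra_simps power2_eq_square)
  moreover have "0 \<le> (c + 1)\<^sup>2 * (2 * t * a + t\<^sup>2 * c)" using nonneg[of t] by simp
  ultimately have "a\<^sup>2 * (c + 2) \<le> 0" by simp
  then show ?thesis using \<open>c \<ge> 0\<close> by (simp add: mult_le_0_iff)
qed

text \<open>Positivity on the test vectors x + t A x, t real, gives
  2 t |A x|^2 + t^2 (A (A x) | A x) \<ge> 0 for all t.\<close>

lemma positive_op_cinner_zero_imp_zero:
  fixes A :: "'a::complex_inner \<Rightarrow> 'a"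
  assumes pos: "positive_op A" and sa: "selfadjoint_op A" and A: "clinear A"
    and x: "cinner (A x) x = 0"
  shows "A x = 0"
proof -
  define y where "y = A x"
  have expand: "Re (cinner (A (x + complex_of_real t *\<^sub>C y)) (x + complex_of_real t *\<^sub>C y))
      = 2 * t * (norm y)\<^sup>2 + t\<^sup>2 * Re (cinner (A y) y)" for t
  proof -
    have "cinner (A y) x = cinner y y" using sa by (simp add: selfadjoint_op_def y_def)
    then show ?thesis using x
      by (simp add: clinear_add[OF A] clinear_scaleC[OF A] cinner_simps y_def[symmetric]
          cinner_self power2_eq_square algebra_simps)
  qed
  have nonneg: "0 \<le> Re (cinner (A z) z)" for z using pos by (simp add: positive_op_def)
  have "(norm y)\<^sup>2 = 0"
  proof (rule linear_coeff_zero_if_quadratic_nonneg[of "Re (cinner (A y) y)"])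
    show "0 \<le> 2 * t * (norm y)\<^sup>2 + t\<^sup>2 * Re (cinner (A y) y)" for t
      using nonneg expand by metis
  qed (rule nonneg)
  then show ?thesis by (simp add: y_def)
qed

global_interpretation cv: vector_space "scaleC :: complex \<Rightarrow> 'a::complex_vector \<Rightarrow> 'a"
  by unfold_locales (simp_all add: scaleC_add_right scaleC_add_left)

lemma (in vector_space) span_eq_if_independent_card_ge:
  assumes S: "independent S" "S \<subseteq> span T" and T: "finite T" "card T \<le> card S"
  shows "span S = span T"
proof -
  have "T \<subseteq> span S"
  proof
    fix t assume "t \<in> T"
    show "t \<in> span S"
    proof (rule ccontr)
      assume t: "t \<notin> span S"
      have "insert t S \<subseteq> span T" using S(2) \<open>t \<in> T\<close> span_base by blast
      then have "finite (insert t S)" "card (insert t S) \<le> card T"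
        using independent_span_bound[OF T(1) independent_insertI[OF t S(1)]] by auto
      moreover have "t \<notin> S" using t span_base by blast
      ultimately show False using T(2) by simp
    qed
  qed
  then have "span T \<subseteq> span S" by (rule span_minimal[OF _ subspace_span])
  moreover have "span S \<subseteq> span T" using S(2) by (rule span_minimal[OF _ subspace_span])
  ultimately show ?thesis by blast
qed

lemma clin_indep_familyD:
  "clin_indep_family I v \<Longrightarrow> (\<Sum>k\<in>I. c k *\<^sub>C v k) = 0 \<Longrightarrow> k \<in> I \<Longrightarrow> c k = 0"
  by (simp add: clin_indep_family_def)

lemma clin_indep_family_subset:
  assumes indep: "clin_indep_family J v" and "I \<subseteq> J" "finite J"
  shows "clin_indep_family I v"
  unfolding clin_indep_family_def
proof (intro allI impI ballI)
  fix c :: "nat \<Rightarrow> complex" and k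
  assume c: "(\<Sum>k\<in>I. c k *\<^sub>C v k) = 0" and "k \<in> I"
  define c' where "c' k = (if k \<in> I then c k else 0)" for k
  have "(\<Sum>k\<in>J. c' k *\<^sub>C v k) = (\<Sum>k\<in>I. c k *\<^sub>C v k)"
    using assms(2,3) by (intro sum.mono_neutral_cong_right) (auto simp: c'_def)
  then have "c' k = 0" using c \<open>k \<in> I\<close> assms(2) by (intro clin_indep_familyD[OF indep]) auto
  then show "c k = 0" using \<open>k \<in> I\<close> by (simp add: c'_def)
qed

lemma clin_indep_family_inj_on:
  assumes indep: "clin_indep_family I v" and "finite I"
  shows "inj_on v I"
proof (rule inj_onI, rule ccontr)
  fix i j assume ij: "i \<in> I" "j \<in> I" "v i = v j" "i \<noteq> j"
  define c where "c k = (if k = i then 1 else if k = j then -1 else (0::complex))" for k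
  have "(\<Sum>k\<in>I. c k *\<^sub>C v k) = (\<Sum>k\<in>{i, j}. c k *\<^sub>C v k)"
    using ij assms(2) by (intro sum.mono_neutral_right) (auto simp: c_def)
  also have "\<dots> = 0" using ij by (simp add: c_def scaleC_minus_left)
  finally have "c i = 0" using ij(1) by (rule clin_indep_familyD[OF indep])
  then show False by (simp add: c_def)
qed

lemma clin_indep_family_independent:
  assumes indep: "clin_indep_family I v" and "finite I"
  shows "cv.independent (v ` I)"
proof
  assume "cv.dependent (v ` I)"
  then obtain a where a: "\<exists>x\<in>v ` I. a x \<noteq> 0" "(\<Sum>x\<in>v ` I. a x *\<^sub>C x) = 0"
    using cv.dependent_finite[of "v ` I"] assms(2) by blast
  then have "(\<Sum>k\<in>I. a (v k) *\<^sub>C v k) = 0"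
    by (simp add: sum.reindex[OF clin_indep_family_inj_on[OF assms]])
  then have "\<forall>k\<in>I. a (v k) = 0" using clin_indep_familyD[OF indep, of "\<lambda>k. a (v k)"] by blast
  then show False using a(1) by blast
qed

lemma sum_scaleC_in_span: "(\<Sum>k\<in>I. c k *\<^sub>C v k) \<in> cv.span (v ` I)"
  by (intro cv.span_sum cv.span_scale cv.span_base) auto

lemma sum_if_eq_scaleC:
  assumes "finite I" "j \<in> I"
  shows "(\<Sum>l\<in>I. (if l = j then 1 else 0) *\<^sub>C f l) = (f j :: 'a::complex_vector)"
proof -
  have "(\<Sum>l\<in>I. (if l = j then 1 else 0) *\<^sub>C f l) = (\<Sum>l\<in>I. if l = j then f l else 0)"
    by (intro sum.cong) auto
  then show ?thesis using assms by simp
qed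

lemma subspace_range_clinear:
  assumes "clinear f"
  shows "cv.subspace (range f)"
  unfolding cv.subspace_def
proof (intro conjI ballI allI)
  show "0 \<in> range f" by (rule range_eqI[of _ f 0]) (simp add: clinear_zero[OF assms])
  fix x y c assume "x \<in> range f" "y \<in> range f"
  then obtain a b where "x = f a" "y = f b" by auto
  then show "x + y \<in> range f" "c *\<^sub>C x \<in> range f"
    using clinear_add[OF assms, of a b, symmetric] clinear_scaleC[OF assms, of c a, symmetric] by auto
qed

lemma span_image_eq_sums:
  assumes "finite I" "inj_on v I"
  shows "cv.span (v ` I) = {\<Sum>k\<in>I. c k *\<^sub>C v k | c. True}"
proof
  show "cv.span (v ` I) \<subseteq> {\<Sum>k\<in>I. c k *\<^sub>C v k | c. True}"
  proof
    fix y assume "y \<in> cv.span (v ` I)"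
    then obtain a where "y = (\<Sum>x\<in>v ` I. a x *\<^sub>C x)"
      using cv.span_finite[of "v ` I"] assms(1) by auto
    then have "y = (\<Sum>k\<in>I. a (v k) *\<^sub>C v k)" by (simp add: sum.reindex[OF assms(2)])
    then show "y \<in> {\<Sum>k\<in>I. c k *\<^sub>C v k | c. True}" by (auto intro!: exI[of _ "\<lambda>k. a (v k)"])
  qed
  show "{\<Sum>k\<in>I. c k *\<^sub>C v k | c. True} \<subseteq> cv.span (v ` I)"
    using sum_scaleC_in_span by blast
qed

lemma has_cdim_span:
  assumes "clin_indep_family {..<n} v"
  shows "has_cdim (cv.span (v ` {..<n})) n"
  unfolding has_cdim_def
  using assms span_image_eq_sums[OF finite_lessThan clin_indep_family_inj_on[OF assms]] by blast

lemma has_cdim_imp_span: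
  assumes "has_cdim V n"
  obtains v where "V = cv.span (v ` {..<n})"
proof -
  obtain v where indep: "clin_indep_family {..<n} v" and V: "V = {\<Sum>k<n. c k *\<^sub>C v k | c. True}"
    using assms by (auto simp: has_cdim_def)
  show thesis
    using span_image_eq_sums[OF finite_lessThan clin_indep_family_inj_on[OF indep]]
    by (intro that[of v]) (simp add: V)
qed

section \<open>Orthonormal families and orthogonal projections\<close>

definition ONfam :: "nat \<Rightarrow> (nat \<Rightarrow> 'a::complex_inner) \<Rightarrow> bool" where
  "ONfam n u \<longleftrightarrow> (\<forall>i<n. \<forall>j<n. cinner (u i) (u j) = (if i = j then 1 else 0))"

lemma ONfam_sum_cinner:
  assumes "ONfam n u" "j < n"
  shows "(\<Sum>i<n. a i * cinner (u i) (u j)) = a j"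
proof -
  have "(\<Sum>i<n. a i * cinner (u i) (u j)) = (\<Sum>i<n. if i = j then a i else 0)"
    using assms by (intro sum.cong) (auto simp: ONfam_def)
  then show ?thesis using assms(2) by simp
qed

lemma ONfam_clin_indep:
  assumes "ONfam n u"
  shows "clin_indep_family {..<n} u"
  unfolding clin_indep_family_def
proof (intro allI impI ballI)
  fix c :: "nat \<Rightarrow> complex" and j assume "(\<Sum>i<n. c i *\<^sub>C u i) = 0" "j \<in> {..<n}"
  then have "cinner (\<Sum>i<n. c i *\<^sub>C u i) (u j) = 0" by simp
  then have "(\<Sum>i<n. c i * cinner (u i) (u j)) = 0"
    by (simp add: cinner_sum_left cinner_scaleC_left)
  then show "c j = 0" using ONfam_sum_cinner[OF assms] \<open>j \<in> {..<n}\<close> by simp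
qed

definition proj :: "nat \<Rightarrow> (nat \<Rightarrow> 'a::complex_inner) \<Rightarrow> 'a \<Rightarrow> 'a" where
  "proj n u x = (\<Sum>i<n. cinner x (u i) *\<^sub>C u i)"

lemma proj_in_span: "proj n u x \<in> cv.span (u ` {..<n})"
  unfolding proj_def by (rule sum_scaleC_in_span)

lemma proj_orthogonal:
  assumes "ONfam n u" "j < n"
  shows "cinner (x - proj n u x) (u j) = 0"
  using ONfam_sum_cinner[OF assms]
  by (simp add: proj_def cinner_diff_left cinner_sum_left cinner_scaleC_left)

lemma cinner_eq_zero_on_span:
  assumes "\<And>j. j < n \<Longrightarrow> cinner z (u j) = 0" "y \<in> cv.span (u ` {..<n})"
  shows "cinner z y = 0"
proof -
  have "cv.subspace {y. cinner z y = 0}"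
    unfolding cv.subspace_def by (auto simp: cinner_add_right cinner_scaleC_right)
  moreover have "u ` {..<n} \<subseteq> {y. cinner z y = 0}" using assms(1) by auto
  ultimately show ?thesis using assms(2) cv.span_minimal by blast
qed

lemma cinner_diff_proj_span:
  assumes "ONfam n u" "y \<in> cv.span (u ` {..<n})"
  shows "cinner (x - proj n u x) y = 0"
  by (rule cinner_eq_zero_on_span[OF proj_orthogonal[OF assms(1)] assms(2)])

lemma proj_fixes_span:
  assumes "ONfam n u" "y \<in> cv.span (u ` {..<n})"
  shows "proj n u y = y"
proof -
  have "y - proj n u y \<in> cv.span (u ` {..<n})" by (intro cv.span_diff assms(2) proj_in_span)
  then have "cinner (y - proj n u y) (y - proj n u y) = 0"
    by (rule cinner_diff_proj_span[OF assms(1)])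
  then show ?thesis by (simp add: cinner_self_eq_zero)
qed

lemma proj_selfadjoint: "cinner (proj n u x) y = cinner x (proj n u y)"
  by (simp add: proj_def cinner_sum_left cinner_sum_right cinner_scaleC_left cinner_scaleC_right
      mult.commute)

lemma cinner_diff_proj_swap: "cinner x (y - proj n u y) = cinner (x - proj n u x) y"
  by (simp add: cinner_diff_left cinner_diff_right proj_selfadjoint)

lemma clinear_proj: "clinear (proj n u)"
  by (simp add: clinear_def proj_def cinner_add_left cinner_scaleC_left scaleC_add_left
      sum.distrib scaleC_sum_right)

lemma ONfam_fun_upd_sgn:
  assumes u: "ONfam n u" and "w \<noteq> 0" and wu: "\<And>j. j < n \<Longrightarrow> cinner w (u j) = 0"
  shows "ONfam (Suc n) (u(n := sgn w))"
  unfolding ONfam_def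
proof (intro allI impI)
  have uw: "cinner (u j) w = 0" if "j < n" for j
    using wu[OF that] by (metis cnj_cinner complex_cnj_zero)
  fix i j assume "i < Suc n" "j < Suc n"
  then consider "i < n" "j < n" | "i = n" "j < n" | "i < n" "j = n" | "i = n" "j = n"
    by (auto simp: less_Suc_eq)
  then show "cinner ((u(n := sgn w)) i) ((u(n := sgn w)) j) = (if i = j then 1 else 0)"
    using u wu uw cinner_sgn_self[OF \<open>w \<noteq> 0\<close>]
    by cases (auto simp: ONfam_def sgn_eq_scaleC cinner_scaleC_left cinner_scaleC_right)
qed

lemma gram_schmidt:
  fixes v :: "nat \<Rightarrow> 'a::complex_inner"
  assumes "clin_indep_family {..<n} v"
  shows "\<exists>u. ONfam n u \<and> cv.span (u ` {..<n}) = cv.span (v ` {..<n})"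
  using assms
proof (induction n)
  case 0
  then show ?case by (auto simp: ONfam_def)
next
  case (Suc n)
  obtain u where u: "ONfam n u" "cv.span (u ` {..<n}) = cv.span (v ` {..<n})"
    using Suc.IH clin_indep_family_subset[OF Suc.prems] by fastforce
  define w where "w = v n - proj n u (v n)"
  define u' where "u' = u(n := sgn w)"
  have "cv.independent (insert (v n) (v ` {..<n}))"
    using clin_indep_family_independent[OF Suc.prems] by (simp add: lessThan_Suc)
  moreover have "v n \<notin> v ` {..<n}"
    using inj_on_image_mem_iff[OF clin_indep_family_inj_on[OF Suc.prems], of n "{..<n}"] by auto
  ultimately have "v n \<notin> cv.span (v ` {..<n})" by (simp add: cv.independent_insert)
  then have "w \<noteq> 0" using proj_in_span[of n u "v n"] u(2) by (auto simp: w_def)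
  have ON: "ONfam (Suc n) u'"
    unfolding u'_def using u(1) \<open>w \<noteq> 0\<close>
    by (rule ONfam_fun_upd_sgn) (simp add: w_def proj_orthogonal[OF u(1)])
  have span_mono: "cv.span (v ` {..<n}) \<subseteq> cv.span (v ` {..<Suc n})"
    by (rule cv.span_mono) auto
  have "v n \<in> cv.span (v ` {..<Suc n})" by (rule cv.span_base) simp
  moreover have "proj n u (v n) \<in> cv.span (v ` {..<Suc n})"
    using u(2) proj_in_span[of n u "v n"] span_mono by auto
  ultimately have "w \<in> cv.span (v ` {..<Suc n})" unfolding w_def by (rule cv.span_diff)
  then have "u' ` {..<Suc n} \<subseteq> cv.span (v ` {..<Suc n})"
    using u(2) span_mono cv.span_base[of "u _" "u ` {..<n}"]
    by (auto simp: u'_def sgn_eq_scaleC less_Suc_eq intro: cv.span_scale)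
  moreover have "card (u' ` {..<Suc n}) = Suc n"
    using clin_indep_family_inj_on[OF ONfam_clin_indep[OF ON]] by (simp add: card_image)
  ultimately have "cv.span (u' ` {..<Suc n}) = cv.span (v ` {..<Suc n})"
    using card_image_le[of "{..<Suc n}" v]
    by (intro cv.span_eq_if_independent_card_ge clin_indep_family_independent ONfam_clin_indep[OF ON]) auto
  then show ?case using ON by blast
qed

section \<open>Compressions of a positive trace class operator\<close>

lemma ONfam_coordinates_inverse:
  assumes u: "ONfam n u" and w: "clin_indep_family {..<n} w"
    and span: "cv.span (u ` {..<n}) = cv.span (w ` {..<n})"
    and \<beta>: "\<And>i. i < n \<Longrightarrow> u i = (\<Sum>k<n. \<beta> i k *\<^sub>C w k)"
    and "l < n" "k < n"
  shows "(\<Sum>i<n. cinner (w l) (u i) * \<beta> i k) = (if k = l then 1 else 0)"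
proof -
  define c where "c k = (\<Sum>i<n. cinner (w l) (u i) * \<beta> i k)" for k
  have "w l = proj n u (w l)"
    using span \<open>l < n\<close> by (intro proj_fixes_span[OF u, symmetric]) (simp add: cv.span_base)
  also have "\<dots> = (\<Sum>i<n. \<Sum>k<n. (cinner (w l) (u i) * \<beta> i k) *\<^sub>C w k)"
    unfolding proj_def by (intro sum.cong refl) (simp add: \<beta> scaleC_sum_right)
  also have "\<dots> = (\<Sum>k<n. c k *\<^sub>C w k)"
    by (subst sum.swap) (simp add: c_def scaleC_sum_left)
  finally have "(\<Sum>k<n. (c k - (if k = l then 1 else 0)) *\<^sub>C w k) = 0"
    using sum_if_eq_scaleC[of "{..<n}" l w] \<open>l < n\<close> by (simp add: scaleC_diff_left sum_subtractf)
  then have "c k - (if k = l then 1 else 0) = 0"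
    using \<open>k < n\<close> by (intro clin_indep_familyD[OF w]) auto
  then show ?thesis by (simp add: c_def)
qed

lemma sum_cinner_ONfam_eq_matrix_trace:
  fixes T :: "'a::complex_inner \<Rightarrow> 'a"
  assumes T: "clinear T" and u: "ONfam n u" and w: "clin_indep_family {..<n} w"
    and span: "cv.span (u ` {..<n}) = cv.span (w ` {..<n})"
    and C: "\<And>k. k < n \<Longrightarrow> proj n u (T (w k)) = (\<Sum>l<n. C l k *\<^sub>C w l)"
  shows "(\<Sum>i<n. cinner (T (u i)) (u i)) = (\<Sum>k<n. C k k)"
proof -
  have "u i \<in> cv.span (w ` {..<n})" if "i < n" for i
    using span cv.span_base[of "u i" "u ` {..<n}"] that by auto
  then have "\<forall>i\<in>{..<n}. \<exists>c. u i = (\<Sum>k<n. c k *\<^sub>C w k)"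
    using span_image_eq_sums[OF finite_lessThan clin_indep_family_inj_on[OF w]] by auto
  from bchoice[OF this] obtain \<beta> where "\<forall>i\<in>{..<n}. u i = (\<Sum>k<n. \<beta> i k *\<^sub>C w k)"
    by blast
  then have \<beta>: "\<And>i. i < n \<Longrightarrow> u i = (\<Sum>k<n. \<beta> i k *\<^sub>C w k)" by simp
  have diag: "cinner (T (u i)) (u i) = (\<Sum>k<n. \<Sum>l<n. C l k * (cinner (w l) (u i) * \<beta> i k))"
    if "i < n" for i
  proof -
    have "cinner (T (u i)) (u i) = cinner (proj n u (T (u i))) (u i)"
      using proj_fixes_span[OF u, of "u i"] that
      by (simp add: proj_selfadjoint cv.span_base)
    also have "proj n u (T (u i)) = (\<Sum>k<n. \<beta> i k *\<^sub>C (\<Sum>l<n. C l k *\<^sub>C w l))"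
      using C by (simp add: \<beta>[OF that] clinear_sum[OF T] clinear_scaleC[OF T]
          clinear_sum[OF clinear_proj] clinear_scaleC[OF clinear_proj])
    finally show ?thesis
      by (simp add: cinner_sum_left cinner_scaleC_left sum_distrib_left algebra_simps)
  qed
  have "(\<Sum>i<n. cinner (T (u i)) (u i))
      = (\<Sum>i<n. \<Sum>k<n. \<Sum>l<n. C l k * (cinner (w l) (u i) * \<beta> i k))"
    by (intro sum.cong refl diag) simp
  also have "\<dots> = (\<Sum>k<n. \<Sum>l<n. \<Sum>i<n. C l k * (cinner (w l) (u i) * \<beta> i k))"
    by (rule trans[OF sum.swap sum.cong[OF refl sum.swap]])
  also have "\<dots> = (\<Sum>k<n. \<Sum>l<n. C l k * (\<Sum>i<n. cinner (w l) (u i) * \<beta> i k))"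
    by (simp add: sum_distrib_left)
  also have "\<dots> = (\<Sum>k<n. \<Sum>l<n. if l = k then C l k else 0)"
    using ONfam_coordinates_inverse[OF u w span \<beta>] by (intro sum.cong refl) auto
  finally show ?thesis by simp
qed

locale positive_trace_class =
  fixes A :: "'a::chilbert_space \<Rightarrow> 'a"
  assumes trace_class: "trace_class A" and positive: "positive_op A"
    and selfadjoint: "selfadjoint_op A" and bounded: "bounded_clinear A"
begin

lemma clinear: "clinear A"
  using bounded by (rule bounded_clinear_clinear)

lemma has_sum_compression:
  assumes u: "ONfam n u" and B: "is_onb B"
  shows "((\<lambda>b. cinner (A (proj n u b)) (proj n u b)) has_sum (\<Sum>i<n. cinner (A (u i)) (u i))) B"
proof -
  have "cinner (A (proj n u b)) (proj n u b) =
      (\<Sum>j<n. \<Sum>i<n. cinner (A (u i)) (u j) * (cinner (u j) b * cinner b (u i)))" for b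
    by (simp add: proj_def clinear_sum[OF clinear] clinear_scaleC[OF clinear] cinner_sum_left
        cinner_sum_right cinner_scaleC_left cinner_scaleC_right sum_distrib_left algebra_simps)
  moreover have "((\<lambda>b. \<Sum>j<n. \<Sum>i<n. cinner (A (u i)) (u j) * (cinner (u j) b * cinner b (u i)))
      has_sum (\<Sum>j<n. \<Sum>i<n. cinner (A (u i)) (u j) * cinner (u j) (u i))) B"
    by (intro has_sum_sum has_sum_cmult_right parseval[OF B]) auto
  moreover have "(\<Sum>i<n. cinner (A (u i)) (u j) * cinner (u j) (u i)) = cinner (A (u j)) (u j)"
    if "j < n" for j
  proof -
    have "(\<Sum>i<n. cinner (A (u i)) (u j) * cinner (u j) (u i))
        = (\<Sum>i<n. if i = j then cinner (A (u i)) (u j) else 0)"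
      using u that by (intro sum.cong) (auto simp: ONfam_def)
    then show ?thesis using that by simp
  qed
  ultimately show ?thesis by simp
qed

lemma has_sum_cross_compression:
  assumes u: "ONfam n u" and B: "is_onb B"
  shows "((\<lambda>b. cinner (A (proj n u b)) (b - proj n u b)) has_sum 0) B"
proof -
  define w where "w i = A (u i) - proj n u (A (u i))" for i
  have "cinner (A (proj n u b)) (b - proj n u b) = (\<Sum>i<n. cinner (w i) b * cinner b (u i))" for b
  proof -
    have Ab: "A (proj n u b) = (\<Sum>i<n. cinner b (u i) *\<^sub>C A (u i))"
      by (simp add: proj_def clinear_sum[OF clinear] clinear_scaleC[OF clinear])
    have "cinner (A (proj n u b)) (b - proj n u b)
        = cinner (A (proj n u b) - proj n u (A (proj n u b))) b"
      by (rule cinner_diff_proj_swap)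
    also have "\<dots> = (\<Sum>i<n. cinner (w i) b * cinner b (u i))"
      unfolding Ab w_def
      by (simp add: clinear_sum[OF clinear_proj] clinear_scaleC[OF clinear_proj] cinner_sum_left
          cinner_diff_left cinner_scaleC_left sum_subtractf algebra_simps)
    finally show ?thesis .
  qed
  moreover have "((\<lambda>b. \<Sum>i<n. cinner (w i) b * cinner b (u i)) has_sum (\<Sum>i<n. cinner (w i) (u i))) B"
    by (intro has_sum_sum parseval[OF B]) auto
  moreover have "(\<Sum>i<n. cinner (w i) (u i)) = 0"
    unfolding w_def by (intro sum.neutral ballI proj_orthogonal[OF u]) auto
  ultimately show ?thesis by simp
qed

lemma has_sum_trace_minus_compression:
  assumes u: "ONfam n u"
  shows "((\<lambda>b. cinner (A (b - proj n u b)) (b - proj n u b))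
           has_sum (trace_op A - (\<Sum>i<n. cinner (A (u i)) (u i)))) (SOME B. is_onb B)"
proof -
  let ?P = "proj n u"
  have "cinner (A (b - ?P b)) (b - ?P b) = cinner (A b) b - cinner (A (?P b)) (?P b)
     - cinner (A (?P b)) (b - ?P b) - cnj (cinner (A (?P b)) (b - ?P b))" for b
    using selfadjoint
    by (simp add: clinear_diff[OF clinear] cinner_diff_left cinner_diff_right selfadjoint_op_def
        algebra_simps)
  moreover have "((\<lambda>b. cinner (A b) b - cinner (A (?P b)) (?P b)
     - cinner (A (?P b)) (b - ?P b) - cnj (cinner (A (?P b)) (b - ?P b)))
     has_sum (trace_op A - (\<Sum>i<n. cinner (A (u i)) (u i)) - 0 - cnj 0)) (SOME B. is_onb B)"
    using has_sum_cross_compression[OF u is_onb_some]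
    by (intro has_sum_diff trace_class_has_sum_trace_op[OF trace_class]
        has_sum_compression[OF u is_onb_some]) (simp_all only: has_sum_cnj_iff)
  ultimately show ?thesis by simp
qed

lemma cinner_apply_self_nonneg: "0 \<le> cinner (A x) x"
  using positive by (simp add: positive_op_def less_eq_complex_def)

lemma compression_trace_le:
  assumes "ONfam n u"
  shows "(\<Sum>i<n. cinner (A (u i)) (u i)) \<le> trace_op A"
proof -
  let ?f = "\<lambda>b. cinner (A (b - proj n u b)) (b - proj n u b)" and ?B = "SOME B::'a set. is_onb B"
  have hs: "(?f has_sum (trace_op A - (\<Sum>i<n. cinner (A (u i)) (u i)))) ?B"
    by (rule has_sum_trace_minus_compression[OF assms])
  have "0 \<le> infsum ?f ?B"
    by (rule infsum_nonneg_complex) (use hs in \<open>auto simp: has_sum_iff cinner_apply_self_nonneg\<close>)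
  then have "0 \<le> trace_op A - (\<Sum>i<n. cinner (A (u i)) (u i))" using hs by (simp add: has_sum_iff)
  then show ?thesis by (simp add: less_eq_complex_def)
qed

lemma compression_trace_eq_iff_complement_zero:
  assumes u: "ONfam n u"
  shows "trace_op A = (\<Sum>i<n. cinner (A (u i)) (u i)) \<longleftrightarrow>
    (\<forall>b\<in>(SOME B. is_onb B). A (b - proj n u b) = 0)"
proof -
  let ?f = "\<lambda>b. cinner (A (b - proj n u b)) (b - proj n u b)" and ?B = "SOME B::'a set. is_onb B"
  have hs: "(?f has_sum (trace_op A - (\<Sum>i<n. cinner (A (u i)) (u i)))) ?B"
    by (rule has_sum_trace_minus_compression[OF u])
  have "trace_op A = (\<Sum>i<n. cinner (A (u i)) (u i)) \<longleftrightarrow> (?f has_sum 0) ?B"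
  proof
    assume "(?f has_sum 0) ?B"
    then show "trace_op A = (\<Sum>i<n. cinner (A (u i)) (u i))" using has_sum_unique[OF hs] by fastforce
  qed (use hs in simp)
  also have "\<dots> \<longleftrightarrow> (\<forall>b\<in>?B. ?f b = 0)"
  proof
    assume "(?f has_sum 0) ?B"
    then show "\<forall>b\<in>?B. ?f b = 0"
      by (auto intro: nonneg_has_sum_le_0D_complex[where f = ?f] cinner_apply_self_nonneg)
  qed (rule has_sum_0, simp)
  also have "\<dots> \<longleftrightarrow> (\<forall>b\<in>?B. A (b - proj n u b) = 0)"
    using positive_op_cinner_zero_imp_zero[OF positive selfadjoint clinear] by auto
  finally show ?thesis .
qed

lemma apply_diff_proj_zero_iff:
  "(\<forall>y. A (y - proj n u y) = 0) \<longleftrightarrow> (\<forall>x. proj n u (A x) = A x)"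
proof -
  have eq: "cinner (A (y - proj n u y)) x = cinner y (A x - proj n u (A x))" for x y
    using selfadjoint by (simp add: selfadjoint_op_def cinner_diff_proj_swap)
  show ?thesis
  proof
    assume "\<forall>y. A (y - proj n u y) = 0"
    then have "cinner y (A x - proj n u (A x)) = 0" for x y using eq[of y x] by simp
    then have "A x - proj n u (A x) = 0" for x using cinner_self_eq_zero by blast
    then show "\<forall>x. proj n u (A x) = A x" by simp
  next
    assume "\<forall>x. proj n u (A x) = A x"
    then have "cinner (A (y - proj n u y)) x = 0" for x y using eq by simp
    then show "\<forall>y. A (y - proj n u y) = 0" using cinner_eq_zero_allI by blast
  qed
qed

lemma apply_diff_proj_zero_if_basis:
  assumes B: "is_onb B" and zero: "\<forall>b\<in>B. A (b - proj n u b) = 0"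
  shows "A (y - proj n u y) = 0"
proof (rule cinner_eq_zero_allI)
  fix z
  have "cinner (b - proj n u b) (A z) = 0" if "b \<in> B" for b
  proof -
    have "cinner (b - proj n u b) (A z) = cinner (A (b - proj n u b)) z"
      using selfadjoint by (simp add: selfadjoint_op_def)
    then show ?thesis using zero that by simp
  qed
  then have "((\<lambda>b. cinner y b * cinner b (A z - proj n u (A z))) has_sum 0) B"
    by (intro has_sum_0) (simp add: cinner_diff_proj_swap)
  then have "cinner y (A z - proj n u (A z)) = 0"
    using parseval[OF B] has_sum_unique by blast
  then show "cinner (A (y - proj n u y)) z = 0"
    using selfadjoint by (simp add: selfadjoint_op_def cinner_diff_proj_swap)
qed

lemma compression_trace_eq_iff_range_subset:
  assumes u: "ONfam n u"
  shows "trace_op A = (\<Sum>i<n. cinner (A (u i)) (u i)) \<longleftrightarrow> range A \<subseteq> cv.span (u ` {..<n})"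
proof -
  have "trace_op A = (\<Sum>i<n. cinner (A (u i)) (u i)) \<longleftrightarrow> (\<forall>y. A (y - proj n u y) = 0)"
    unfolding compression_trace_eq_iff_complement_zero[OF u]
    using apply_diff_proj_zero_if_basis[OF is_onb_some] by blast
  also have "\<dots> \<longleftrightarrow> (\<forall>x. proj n u (A x) = A x)"
    by (rule apply_diff_proj_zero_iff)
  also have "\<dots> \<longleftrightarrow> range A \<subseteq> cv.span (u ` {..<n})"
  proof
    assume "\<forall>x. proj n u (A x) = A x"
    then have "A x \<in> cv.span (u ` {..<n})" for x using proj_in_span[of n u "A x"] by simp
    then show "range A \<subseteq> cv.span (u ` {..<n})" by blast
  qed (use proj_fixes_span[OF u] in blast)
  finally show ?thesis .
qed

end

section \<open>Krylov vectors\<close>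

locale krylov = positive_trace_class +
  fixes e :: "'a::chilbert_space" and N :: nat
  assumes N_pos: "N \<ge> 1"
    and indep: "clin_indep_family {1..N} (\<lambda>k. (A ^^ k) e)"
begin

abbreviation v :: "nat \<Rightarrow> 'a" where "v k \<equiv> (A ^^ k) e"

abbreviation moment :: "nat \<Rightarrow> complex" where "moment k \<equiv> cinner ((A ^^ k) e) e"

lemma cinner_v: "cinner (v k) (v l) = moment (k + l)"
proof -
  have "cinner (v k) (v l) = cinner ((A ^^ l) (v k)) e"
    by (rule selfadjoint_op_funpow[OF selfadjoint, symmetric])
  also have "(A ^^ l) (v k) = v (l + k)" by (simp add: funpow_add)
  also have "l + k = k + l" by (rule add.commute)
  finally show ?thesis .
qed

lemma apply_sum_v: "A (\<Sum>k\<in>I. c k *\<^sub>C v k) = (\<Sum>k\<in>I. c k *\<^sub>C v (Suc k))"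
  by (simp add: clinear_sum[OF clinear] clinear_scaleC[OF clinear])

lemma indep_v_Suc: "clin_indep_family {..<N} (\<lambda>k. v (Suc k))"
  unfolding clin_indep_family_def
proof (intro allI impI ballI)
  fix c :: "nat \<Rightarrow> complex" and k
  assume c: "(\<Sum>k<N. c k *\<^sub>C v (Suc k)) = 0" and "k \<in> {..<N}"
  have "(\<Sum>j\<in>{1..N}. c (j - 1) *\<^sub>C v j) = (\<Sum>j\<in>Suc ` {..<N}. c (j - 1) *\<^sub>C v j)"
    by (simp only: image_Suc_lessThan)
  also have "\<dots> = (\<Sum>k<N. c k *\<^sub>C v (Suc k))" by (simp add: sum.reindex del: funpow.simps)
  finally have "(\<Sum>j\<in>{1..N}. c (j - 1) *\<^sub>C v j) = (\<Sum>k<N. c k *\<^sub>C v (Suc k))" .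
  then have "c (Suc k - 1) = 0"
    using c \<open>k \<in> {..<N}\<close> by (intro clin_indep_familyD[OF indep]) auto
  then show "c k = 0" by simp
qed

lemma indep_v: "clin_indep_family {..<N} v"
  unfolding clin_indep_family_def
proof (intro allI impI ballI)
  fix c :: "nat \<Rightarrow> complex" and k
  assume "(\<Sum>k<N. c k *\<^sub>C v k) = 0" and "k \<in> {..<N}"
  then have "(\<Sum>k<N. c k *\<^sub>C v (Suc k)) = 0"
    using apply_sum_v[of c "{..<N}"] clinear_zero[OF clinear] by simp
  then show "c k = 0" using indep_v_Suc \<open>k \<in> {..<N}\<close> by (simp add: clin_indep_family_def)
qed

definition krylov_space :: "'a set" where "krylov_space = cv.span (v ` {..<N})"

definition krylov_onb :: "nat \<Rightarrow> 'a" where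
  "krylov_onb = (SOME u. ONfam N u \<and> cv.span (u ` {..<N}) = krylov_space)"

lemma ONfam_krylov_onb: "ONfam N krylov_onb"
  and span_krylov_onb: "cv.span (krylov_onb ` {..<N}) = krylov_space"
proof -
  have "\<exists>u. ONfam N u \<and> cv.span (u ` {..<N}) = krylov_space"
    unfolding krylov_space_def by (rule gram_schmidt[OF indep_v])
  then have "ONfam N krylov_onb \<and> cv.span (krylov_onb ` {..<N}) = krylov_space"
    unfolding krylov_onb_def by (rule someI_ex)
  then show "ONfam N krylov_onb" "cv.span (krylov_onb ` {..<N}) = krylov_space" by auto
qed

lemma proj_v: "k < N \<Longrightarrow> proj N krylov_onb (v k) = v k"
  using span_krylov_onb
  by (intro proj_fixes_span[OF ONfam_krylov_onb]) (simp add: krylov_space_def cv.span_base)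

definition proj_coeff :: "nat \<Rightarrow> complex" where
  "proj_coeff = (SOME d. proj N krylov_onb (v N) = (\<Sum>l<N. d l *\<^sub>C v l))"

lemma proj_v_N: "proj N krylov_onb (v N) = (\<Sum>l<N. proj_coeff l *\<^sub>C v l)"
proof -
  have "proj N krylov_onb (v N) \<in> cv.span (v ` {..<N})"
    using proj_in_span[of N krylov_onb] span_krylov_onb by (simp add: krylov_space_def)
  then have "\<exists>d. proj N krylov_onb (v N) = (\<Sum>l<N. d l *\<^sub>C v l)"
    using span_image_eq_sums[OF finite_lessThan clin_indep_family_inj_on[OF indep_v]] by auto
  then show ?thesis unfolding proj_coeff_def by (rule someI_ex)
qed

lemma hankel_system: "k < N \<Longrightarrow> (\<Sum>l<N. moment (k + l) * proj_coeff l) = moment (k + N)"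
proof -
  assume "k < N"
  have "cinner (proj N krylov_onb (v N)) (v k) = cinner (v N) (v k)"
    by (simp add: proj_selfadjoint proj_v[OF \<open>k < N\<close>])
  then show ?thesis
    by (simp add: proj_v_N cinner_sum_left cinner_scaleC_left cinner_v add.commute mult.commute)
qed

lemma hankel_injective:
  assumes x: "\<And>k. k < N \<Longrightarrow> (\<Sum>l<N. moment (k + l) * x l) = 0" and "l < N"
  shows "x l = 0"
proof -
  define z where "z = (\<Sum>l<N. x l *\<^sub>C v l)"
  have "cinner z (v k) = 0" if "k < N" for k
    using x[OF that] by (simp add: z_def cinner_sum_left cinner_scaleC_left cinner_v add.commute mult.commute)
  moreover have "cinner z z = (\<Sum>l<N. cnj (x l) * cinner z (v l))"
    unfolding z_def by (simp add: cinner_sum_right cinner_scaleC_right)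
  ultimately have "cinner z z = 0" by simp
  then have "(\<Sum>l<N. x l *\<^sub>C v l) = 0" by (simp add: z_def cinner_self_eq_zero)
  then show "x l = 0" using \<open>l < N\<close> by (intro clin_indep_familyD[OF indep_v]) auto
qed

lemma compression_trace_eq: "(\<Sum>i<N. cinner (A (krylov_onb i)) (krylov_onb i)) = proj_coeff (N - 1)"
proof -
  define C where "C l k = (if k < N - 1 then (if l = Suc k then 1 else 0) else proj_coeff l)" for l k
  have "proj N krylov_onb (A (v k)) = (\<Sum>l<N. C l k *\<^sub>C v l)" if "k < N" for k
  proof (cases "k < N - 1")
    case True
    then have "proj N krylov_onb (A (v k)) = v (Suc k)" using proj_v[of "Suc k"] by simp
    then show ?thesis using True by (simp add: C_def sum_if_eq_scaleC)
  next
    case False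
    then have "Suc k = N" using that by simp
    then have "A (v k) = v N" by auto
    then show ?thesis using False proj_v_N by (simp add: C_def)
  qed
  then have "(\<Sum>i<N. cinner (A (krylov_onb i)) (krylov_onb i)) = (\<Sum>k<N. C k k)"
    using span_krylov_onb unfolding krylov_space_def
    by (intro sum_cinner_ONfam_eq_matrix_trace[OF clinear ONfam_krylov_onb indep_v]) auto
  also have "\<dots> = (\<Sum>k<N. if k = N - 1 then proj_coeff (N - 1) else 0)"
    by (intro sum.cong) (auto simp: C_def)
  finally show ?thesis using N_pos by simp
qed

lemma span_v_Suc_eq:
  assumes "range A \<subseteq> cv.span (x ` {..<N})"
  shows "cv.span ((\<lambda>k. v (Suc k)) ` {..<N}) = cv.span (x ` {..<N})"
proof (rule cv.span_eq_if_independent_card_ge)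
  show "cv.independent ((\<lambda>k. v (Suc k)) ` {..<N})"
    by (rule clin_indep_family_independent[OF indep_v_Suc]) simp
  show "(\<lambda>k. v (Suc k)) ` {..<N} \<subseteq> cv.span (x ` {..<N})"
    using assms by auto
  show "card (x ` {..<N}) \<le> card ((\<lambda>k. v (Suc k)) ` {..<N})"
    using card_image_le[of "{..<N}" x] card_image[OF clin_indep_family_inj_on[OF indep_v_Suc]]
    by simp
qed simp

lemma span_v_Suc_subset_range: "cv.span ((\<lambda>k. v (Suc k)) ` {..<N}) \<subseteq> range A"
  by (rule cv.span_minimal[OF _ subspace_range_clinear[OF clinear]]) auto

lemma has_cdim_range_if_range_subset:
  assumes "range A \<subseteq> krylov_space"
  shows "has_cdim (range A) N" and "e \<in> range A"
proof -
  have span: "cv.span ((\<lambda>k. v (Suc k)) ` {..<N}) = krylov_space"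
    using span_v_Suc_eq[of v] assms unfolding krylov_space_def by simp
  then have "range A = krylov_space" using span_v_Suc_subset_range assms by blast
  then show "has_cdim (range A) N" using has_cdim_span[OF indep_v_Suc] span by simp
  have "e \<in> v ` {..<N}" using N_pos by (intro image_eqI[of e v 0]) auto
  then show "e \<in> range A"
    using \<open>range A = krylov_space\<close> unfolding krylov_space_def by (simp add: cv.span_base)
qed

lemma range_subset_if_has_cdim_range:
  assumes "has_cdim (range A) N" and "e \<in> range A"
  shows "range A \<subseteq> krylov_space"
proof -
  obtain x where x: "range A = cv.span (x ` {..<N})"
    using has_cdim_imp_span assms(1) by blast
  then have span: "cv.span ((\<lambda>k. v (Suc k)) ` {..<N}) = range A"
    using span_v_Suc_eq by simp
  have "v ` {..<N} \<subseteq> cv.span ((\<lambda>k. v (Suc k)) ` {..<N})"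
  proof
    fix y assume "y \<in> v ` {..<N}"
    then obtain k where "k < N" "y = v k" by auto
    then show "y \<in> cv.span ((\<lambda>k. v (Suc k)) ` {..<N})"
      using span assms(2) by (cases k) (auto intro: cv.span_base)
  qed
  then have "cv.span (v ` {..<N}) = range A"
    using card_image[OF clin_indep_family_inj_on[OF indep_v]] card_image_le[of "{..<N}" "\<lambda>k. v (Suc k)"]
    by (subst span[symmetric], intro cv.span_eq_if_independent_card_ge
        clin_indep_family_independent[OF indep_v]) auto
  then show ?thesis unfolding krylov_space_def by simp
qed

lemma range_subset_krylov_space_iff: "range A \<subseteq> krylov_space \<longleftrightarrow> has_cdim (range A) N \<and> e \<in> range A"
  using has_cdim_range_if_range_subset range_subset_if_has_cdim_range by blast

lemma hankel_det_ratio: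
  "det (mat N N (\<lambda>(k, l). if l < N - 1 then moment (k + l) else moment (k + N)))
     / det (mat N N (\<lambda>(k, l). moment (k + l))) = proj_coeff (N - 1)"
proof -
  define G where "G = mat N N (\<lambda>(k, l). moment (k + l))"
  have G: "G \<in> carrier_mat N N" by (simp add: G_def)
  have mult_vec: "(G *\<^sub>v y) $ k = (\<Sum>l<N. moment (k + l) * y $ l)" if "k < N" "y \<in> carrier_vec N" for k y
    using that by (simp add: G_def scalar_prod_def lessThan_atLeast0)
  have "G *\<^sub>v vec N proj_coeff = vec N (\<lambda>k. moment (k + N))"
  proof (rule eq_vecI)
    fix k assume "k < dim_vec (vec N (\<lambda>k. moment (k + N)))"
    then have "k < N" by simp
    then show "(G *\<^sub>v vec N proj_coeff) $ k = vec N (\<lambda>k. moment (k + N)) $ k"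
      using mult_vec[OF \<open>k < N\<close>, of "vec N proj_coeff"] hankel_system[OF \<open>k < N\<close>] by simp
  qed (simp add: G_def)
  then have numerator: "mat N N (\<lambda>(k, l). if l < N - 1 then moment (k + l) else moment (k + N))
      = replace_col G (G *\<^sub>v vec N proj_coeff) (N - 1)"
    by (intro eq_matI) (auto simp: replace_col_def G_def)
  have "det G \<noteq> 0"
  proof
    assume "det G = 0"
    then obtain y where y: "y \<in> carrier_vec N" "y \<noteq> 0\<^sub>v N" "G *\<^sub>v y = 0\<^sub>v N"
      using det_0_iff_vec_prod_zero[OF G] by blast
    have "y $ l = 0" if "l < N" for l
      using y(1,3) that mult_vec[OF _ y(1)] by (intro hankel_injective[of "\<lambda>l. y $ l"]) auto
    then show False using y(1,2) by (auto intro: eq_vecI)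
  qed
  then show ?thesis
    using cramer_lemma_mat[OF G, of "vec N proj_coeff" "N - 1"] N_pos
    unfolding numerator G_def[symmetric] by simp
qed

end

theorem lemma7:
  fixes A :: "'a::chilbert_space \<Rightarrow> 'a" and e :: 'a and N :: nat
  assumes "trace_class A" and "positive_op A" and "selfadjoint_op A" and "bounded_clinear A"
    and "N \<ge> 1"
    and "clin_indep_family {1..N} (\<lambda>k. (A ^^ k) e)"
  shows "det (mat N N (\<lambda>(k, l). if l < N - 1 then cinner ((A ^^ (k + l)) e) e
                                   else cinner ((A ^^ (k + N)) e) e))
           / det (mat N N (\<lambda>(k, l). cinner ((A ^^ (k + l)) e) e)) \<le> trace_op A
     \<and> (trace_op A = det (mat N N (\<lambda>(k, l). if l < N - 1 then cinner ((A ^^ (k + l)) e) e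
                                   else cinner ((A ^^ (k + N)) e) e))
           / det (mat N N (\<lambda>(k, l). cinner ((A ^^ (k + l)) e) e))
         \<longleftrightarrow> has_cdim (range A) N \<and> e \<in> range A)"
proof -
  interpret krylov A e N
    using assms by (simp add: krylov_def krylov_axioms_def positive_trace_class_def)
  show ?thesis
    unfolding hankel_det_ratio compression_trace_eq[symmetric]
    using compression_trace_le[OF ONfam_krylov_onb]
      compression_trace_eq_iff_range_subset[OF ONfam_krylov_onb]
      range_subset_krylov_space_iff span_krylov_onb
    by simp
qed

end
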